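(* Let $X$ be a finite set with $|X|\ge 2$ and let $\rho:X\times X\to\mathbb{R}_{\geq 0}$ be a function such that $\rho(x,y)=0$ if and only if $x=y$. Let $$KR(\rho)=\mathrm{Conv}\Big\{ e_{x,y}:=\frac{e_x-e_y}{\rho(x,y)} \;\Big|\; x,y\in X,\ x\neq y\Big\}\subset V_0(X).$$ Then $\rho$ is a quasi-metric on $X$ if and only if none of the points $e_{x,y}$ ($x\neq y$) lies in the interior of $KR(\rho)$ (interior taken relative to $V_0(X)$).
   Context: $\{e_x\}_{x\in X}$ is the standard basis of $\mathbb{R}^X$, and $V_0(X)=\{\mu\in\mathbb{R}^X:\sum_{x}\mu(x)=0\}$. A quasi-metric (asymmetric distance function) is a function $\rho:X\times X\to\mathbb{R}_{\ge 0}$ such that $\rho(x,y)=0\iff x=y$ and $\rho(x,z)\le\rho(x,y)+\rho(y,z)$ for all $x,y,z\in X$; symmetry is not required. *)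

theory Defs
  imports "HOL-Analysis.Analysis"
begin

text \<open>The finite set X is a finite type 'a; R^X is real^'a; e_x is axis x 1.\<close>

definition V0 :: "(real^'a::finite) set" where
  "V0 = {\<mu>. (\<Sum>x\<in>UNIV. \<mu> $ x) = 0}"

definition exy :: "('a::finite \<Rightarrow> 'a \<Rightarrow> real) \<Rightarrow> 'a \<Rightarrow> 'a \<Rightarrow> real^'a" where
  "exy \<rho> x y = (1 / \<rho> x y) *\<^sub>R (axis x 1 - axis y 1)"

definition KR :: "('a::finite \<Rightarrow> 'a \<Rightarrow> real) \<Rightarrow> (real^'a) set" where
  "KR \<rho> = convex hull {exy \<rho> x y | x y. x \<noteq> y}"

definition quasi_metric :: "('a \<Rightarrow> 'a \<Rightarrow> real) \<Rightarrow> bool" where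
  "quasi_metric \<rho> \<longleftrightarrow> (\<forall>x y. \<rho> x y \<ge> 0) \<and> (\<forall>x y. \<rho> x y = 0 \<longleftrightarrow> x = y)
     \<and> (\<forall>x y z. \<rho> x z \<le> \<rho> x y + \<rho> y z)"

end

theory Submission
  imports Defs
begin

text \<open>Weighting each generator e_{u,v} by \<rho>(u,v) gives a strictly positive convex combination
  equal to 0, so 0 is a relative interior point of KR(\<rho>); in particular KR(\<rho>) spans V_0, and
  interior relative to V_0 is the relative interior. If \<rho> satisfies the triangle inequality, the
  linear functional \<rho>(-, y) is at most 1 on KR(\<rho>) with equality at e_{x,y} but not at e_{y,x},
  so e_{x,y} lies on a proper face. Conversely, if \<rho>(x,z) > \<rho>(x,y) + \<rho>(y,z), then e_{x,z} is
  the convex combination of e_{x,y} and e_{y,z} with weights proportional to \<rho>(x,y), \<rho>(y,z),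
  shrunk towards 0 by the factor (\<rho>(x,y) + \<rho>(y,z)) / \<rho>(x,z) < 1, hence a relative
  interior point.\<close>

lemma subspace_V0: "subspace V0"
  unfolding subspace_def V0_def by (auto simp: sum.distrib sum_distrib_left[symmetric])

lemma exy_in_V0: "exy \<rho> u v \<in> V0"
proof -
  have "axis u 1 - axis v 1 \<in> V0" by (simp add: V0_def axis_def sum_subtractf)
  then show ?thesis unfolding exy_def by (rule subspace_scale[OF subspace_V0])
qed

lemma convex_KR: "convex (KR \<rho>)"
  unfolding KR_def by simp

lemma exy_in_KR: "u \<noteq> v \<Longrightarrow> exy \<rho> u v \<in> KR \<rho>"
  unfolding KR_def by (auto intro: hull_inc)

lemma KR_subset_V0: "KR \<rho> \<subseteq> V0"
  unfolding KR_def
  by (rule hull_minimal) (auto simp: exy_in_V0 subspace_imp_convex[OF subspace_V0])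

lemma scaleR_exy: "\<rho> u v \<noteq> 0 \<Longrightarrow> \<rho> u v *\<^sub>R exy \<rho> u v = axis u 1 - axis v 1"
  by (simp add: exy_def)

lemma inner_axis_diff: "F \<bullet> (axis u 1 - axis v 1 :: real^'n) = F $ u - F $ v"
  by (simp add: inner_diff_right inner_axis)

lemma sum_mem_rel_interior_convex_hull:
  fixes p :: "'i \<Rightarrow> 'a::euclidean_space"
  assumes "finite I" "\<forall>i\<in>I. c i > 0" "sum c I = 1"
  shows "(\<Sum>i\<in>I. c i *\<^sub>R p i) \<in> rel_interior (convex hull (p ` I))"
proof -
  have "p ` I = \<Union>((\<lambda>i. {p i}) ` I)" by blast
  moreover have "rel_interior (convex hull (\<Union>((\<lambda>i. {p i}) ` I))) =
    {\<Sum>i\<in>I. c i *\<^sub>R s i | c s. (\<forall>i\<in>I. c i > 0) \<and> sum c I = 1 \<and>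
      (\<forall>i\<in>I. s i \<in> rel_interior {p i})}"
    by (rule rel_interior_convex_hull_union) (simp_all add: assms(1))
  ultimately show ?thesis
    by (simp only:) (intro CollectI exI[where x = c] exI[where x = p], simp add: assms)
qed

lemma zero_in_rel_interior_KR:
  fixes \<rho> :: "'a::finite \<Rightarrow> 'a \<Rightarrow> real"
  assumes pos: "\<And>u v. u \<noteq> v \<Longrightarrow> \<rho> u v > 0" and ex: "\<exists>u v::'a. u \<noteq> v"
  shows "0 \<in> rel_interior (KR \<rho>)"
proof -
  define I where "I = {(u, v). (u::'a) \<noteq> v}"
  define N where "N = (\<Sum>(u, v)\<in>I. \<rho> u v)"
  have "I \<noteq> {}" using ex by (auto simp: I_def)
  then have "N > 0"
    unfolding N_def by (intro sum_pos) (auto simp: I_def pos)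
  define p where "p = (\<lambda>(u, v). exy \<rho> u v)"
  have KR_eq: "KR \<rho> = convex hull (p ` I)"
    unfolding KR_def I_def p_def by (rule arg_cong[where f = "(hull) convex"]) auto
  have swap: "(\<Sum>(u, v)\<in>I. axis v 1) = (\<Sum>(u, v)\<in>I. axis u (1::real))"
    by (rule sum.reindex_bij_witness[of _ prod.swap prod.swap]) (auto simp: I_def)
  define c where "c = (\<lambda>(u, v). \<rho> u v / N)"
  have "(\<Sum>i\<in>I. c i *\<^sub>R p i) = (1 / N) *\<^sub>R (\<Sum>(u, v)\<in>I. axis u 1 - axis v 1)"
    unfolding scaleR_sum_right c_def p_def
    by (rule sum.cong) (auto simp: I_def exy_def pos[THEN less_imp_neq, symmetric])
  also have "\<dots> = 0"
    using swap by (simp add: sum_subtractf case_prod_unfold)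
  finally have "(\<Sum>i\<in>I. c i *\<^sub>R p i) = 0" .
  moreover have "sum c I = 1"
    using \<open>N > 0\<close> by (simp add: c_def N_def case_prod_unfold sum_divide_distrib[symmetric])
  moreover have "\<forall>i\<in>I. c i > 0"
    using \<open>N > 0\<close> by (auto simp: c_def I_def pos)
  ultimately show ?thesis
    using sum_mem_rel_interior_convex_hull[of I c p] by (simp add: KR_eq)
qed

lemma affine_hull_KR:
  fixes \<rho> :: "'a::finite \<Rightarrow> 'a \<Rightarrow> real"
  assumes pos: "\<And>u v. u \<noteq> v \<Longrightarrow> \<rho> u v > 0" and "0 \<in> KR \<rho>"
  shows "affine hull (KR \<rho>) = V0"
proof -
  have "affine hull (KR \<rho>) = span (KR \<rho>)"
    using assms(2) by (intro affine_hull_span_0 hull_inc)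
  moreover have "span (KR \<rho>) \<subseteq> V0"
    by (rule span_minimal[OF KR_subset_V0 subspace_V0])
  moreover have "\<mu> \<in> span (KR \<rho>)" if "\<mu> \<in> V0" for \<mu>
  proof -
    fix w :: 'a
    have diff_in_span: "axis u 1 - axis w 1 \<in> span (KR \<rho>)" for u
    proof (cases "u = w")
      case False
      then have "\<rho> u w *\<^sub>R exy \<rho> u w \<in> span (KR \<rho>)"
        by (intro span_scale span_base exy_in_KR)
      with False show ?thesis using pos[OF False] by (simp add: scaleR_exy)
    qed (simp add: span_zero)
    have "\<mu> = (\<Sum>u\<in>UNIV. (\<mu> $ u) *\<^sub>R axis u 1) - (\<Sum>u\<in>UNIV. \<mu> $ u) *\<^sub>R axis w 1"
      using that basis_expansion[of \<mu>] by (simp add: V0_def scalar_mult_eq_scaleR)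
    also have "\<dots> = (\<Sum>u\<in>UNIV. (\<mu> $ u) *\<^sub>R (axis u 1 - axis w 1))"
      by (simp add: scaleR_diff_right sum_subtractf scaleR_sum_left)
    also have "\<dots> \<in> span (KR \<rho>)"
      by (intro span_sum span_scale diff_in_span)
    finally show ?thesis .
  qed
  ultimately show ?thesis by auto
qed

lemma rel_interior_eq_interior_of_affine_hull:
  "rel_interior S = top_of_set (affine hull S) interior_of S"
  by (simp add: rel_interior_def interior_of_def)

lemma inner_eq_if_maximal_at_rel_interior:
  fixes S :: "'a::euclidean_space set"
  assumes "convex S" "z \<in> rel_interior S" "x \<in> S" and max: "\<forall>q\<in>S. F \<bullet> q \<le> F \<bullet> z"
  shows "F \<bullet> x = F \<bullet> z"
proof -
  obtain e where "e > 1" "(1 - e) *\<^sub>R x + e *\<^sub>R z \<in> S"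
    using assms(1-3) convex_rel_interior_iff by blast
  then have "(1 - e) * (F \<bullet> x) + e * (F \<bullet> z) \<le> F \<bullet> z"
    using max by (metis inner_add_right inner_scaleR_right)
  then have "(e - 1) * (F \<bullet> z - F \<bullet> x) \<le> 0"
    by (simp add: algebra_simps)
  then have "F \<bullet> z \<le> F \<bullet> x"
    using \<open>e > 1\<close> by (simp add: mult_le_0_iff)
  with max assms(3) show ?thesis by (simp add: order_antisym)
qed

lemma scaleR_mem_rel_interior:
  fixes S :: "'a::euclidean_space set"
  assumes "convex S" "0 \<in> rel_interior S" "w \<in> S" "0 \<le> l" "l < 1"
  shows "l *\<^sub>R w \<in> rel_interior S"
proof -
  have "w - (1 - l) *\<^sub>R (w - 0) \<in> rel_interior S"
    using assms by (intro rel_interior_convex_shrink) auto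
  then show ?thesis by (simp add: algebra_simps)
qed

lemma exy_notin_rel_interior_KR_if_quasi_metric:
  assumes qm: "quasi_metric \<rho>" and "x \<noteq> y"
  shows "exy \<rho> x y \<notin> rel_interior (KR \<rho>)"
proof
  assume interior: "exy \<rho> x y \<in> rel_interior (KR \<rho>)"
  have pos: "\<rho> u v > 0" if "u \<noteq> v" for u v
    using qm that unfolding quasi_metric_def by (metis less_eq_real_def)
  have "\<rho> y y = 0" using qm unfolding quasi_metric_def by blast
  have triangle: "\<rho> u y \<le> \<rho> u v + \<rho> v y" for u v
    using qm unfolding quasi_metric_def by blast
  define F :: "real^'a" where "F = (\<chi> u. \<rho> u y)"
  have F_exy: "F \<bullet> exy \<rho> u v = (\<rho> u y - \<rho> v y) / \<rho> u v" for u v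
    by (simp add: exy_def inner_axis_diff F_def)
  have "F \<bullet> exy \<rho> u v \<le> 1" if "u \<noteq> v" for u v
    using triangle[of u v] pos[OF that] by (simp add: F_exy divide_le_eq)
  then have "KR \<rho> \<subseteq> {q. F \<bullet> q \<le> 1}"
    unfolding KR_def by (intro hull_minimal) (auto simp: convex_halfspace_le)
  moreover have "F \<bullet> exy \<rho> x y = 1"
    using pos[OF \<open>x \<noteq> y\<close>] \<open>\<rho> y y = 0\<close> by (simp add: F_exy)
  ultimately have "F \<bullet> exy \<rho> y x = F \<bullet> exy \<rho> x y"
    using \<open>x \<noteq> y\<close> by (intro inner_eq_if_maximal_at_rel_interior[OF convex_KR interior exy_in_KR]) auto
  moreover have "F \<bullet> exy \<rho> y x < 0"
    using pos \<open>x \<noteq> y\<close> \<open>\<rho> y y = 0\<close> by (simp add: F_exy divide_neg_pos)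
  ultimately show False using \<open>F \<bullet> exy \<rho> x y = 1\<close> by simp
qed

lemma exy_in_rel_interior_KR_if_not_triangle:
  fixes \<rho> :: "'a::finite \<Rightarrow> 'a \<Rightarrow> real"
  assumes nonneg: "\<forall>u v. \<rho> u v \<ge> 0" and zero: "\<forall>u v. \<rho> u v = 0 \<longleftrightarrow> u = v"
    and "0 \<in> rel_interior (KR \<rho>)" and violated: "\<rho> x z > \<rho> x y + \<rho> y z"
  shows "x \<noteq> z" and "exy \<rho> x z \<in> rel_interior (KR \<rho>)"
proof -
  have diag: "\<rho> u u = 0" for u
    using zero by simp
  have "x \<noteq> y" "y \<noteq> z" "x \<noteq> z"
    using violated diag nonneg[rule_format, of x y] nonneg[rule_format, of y z] by auto
  then have pos: "\<rho> x y > 0" "\<rho> y z > 0" "\<rho> x z > 0"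
    using nonneg zero by (auto simp: less_le)
  define s where "s = \<rho> x y + \<rho> y z"
  have "s > 0" using pos by (simp add: s_def)
  define w where "w = (\<rho> x y / s) *\<^sub>R exy \<rho> x y + (\<rho> y z / s) *\<^sub>R exy \<rho> y z"
  have "w \<in> KR \<rho>"
    unfolding w_def using \<open>s > 0\<close> pos \<open>x \<noteq> y\<close> \<open>y \<noteq> z\<close>
    by (intro convexD[OF convex_KR] exy_in_KR) (auto simp: s_def add_divide_distrib[symmetric])
  have "s *\<^sub>R w = axis x 1 - axis z 1"
    using \<open>s > 0\<close> pos by (simp add: w_def scaleR_add_right scaleR_exy)
  then have "exy \<rho> x z = (s / \<rho> x z) *\<^sub>R w"
    unfolding exy_def by (simp flip: \<open>s *\<^sub>R w = axis x 1 - axis z 1\<close>)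
  also have "\<dots> \<in> rel_interior (KR \<rho>)"
    using \<open>s > 0\<close> pos violated
    by (intro scaleR_mem_rel_interior[OF convex_KR assms(3) \<open>w \<in> KR \<rho>\<close>]) (simp_all add: s_def)
  finally show "exy \<rho> x z \<in> rel_interior (KR \<rho>)" .
  show "x \<noteq> z" by fact
qed

theorem mainTheorem1:
  fixes \<rho> :: "'a::finite \<Rightarrow> 'a \<Rightarrow> real"
  assumes "CARD('a) \<ge> 2"
    and "\<forall>x y. \<rho> x y \<ge> 0"
    and "\<forall>x y. \<rho> x y = 0 \<longleftrightarrow> x = y"
  shows "quasi_metric \<rho> \<longleftrightarrow>
    (\<forall>x y. x \<noteq> y \<longrightarrow> exy \<rho> x y \<notin> (top_of_set V0) interior_of (KR \<rho>))"
proof -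
  have pos: "\<rho> u v > 0" if "u \<noteq> v" for u v
    using assms(2,3) that by (metis less_eq_real_def)
  have "\<exists>u v::'a. u \<noteq> v"
    using assms(1) by (metis (full_types) card_le_Suc0_iff_eq finite not_less_eq_eq numeral_2_eq_2)
  then have zero_interior: "0 \<in> rel_interior (KR \<rho>)"
    using pos by (rule zero_in_rel_interior_KR[rotated])
  then have "0 \<in> KR \<rho>"
    using rel_interior_subset by blast
  with pos have "affine hull (KR \<rho>) = V0"
    by (rule affine_hull_KR)
  then have interior_eq: "top_of_set V0 interior_of (KR \<rho>) = rel_interior (KR \<rho>)"
    by (simp add: rel_interior_eq_interior_of_affine_hull)
  show ?thesis
    unfolding interior_eq
  proof (intro iffI allI impI)
    show "exy \<rho> x y \<notin> rel_interior (KR \<rho>)" if "quasi_metric \<rho>" "x \<noteq> y" for x y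
      using that by (rule exy_notin_rel_interior_KR_if_quasi_metric)
  next
    assume no_exy_interior: "\<forall>x y. x \<noteq> y \<longrightarrow> exy \<rho> x y \<notin> rel_interior (KR \<rho>)"
    have "\<rho> x z \<le> \<rho> x y + \<rho> y z" for x y z
      using exy_in_rel_interior_KR_if_not_triangle[OF assms(2,3) zero_interior, of x y z]
        no_exy_interior by (meson not_le)
    with assms(2,3) show "quasi_metric \<rho>"
      unfolding quasi_metric_def by blast
  qed
qed

end
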